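(* Let $F$ be the CDF of a probability measure on $\mathbb{R}$, and for $z\ge0$ define $G_z(x)=\max\{0,F(x)-z\}$ for $x<0$ and $G_z(x)=\min\{1,F(x)+z\}$ for $x\ge0$. Then there exists $z\ge0$ such that $G_z$ is the CDF of a measure in $\mathcal{L}$ that minimizes $\sup_{x\in\mathbb{R}}|F(x)-G(x)|$ over all CDFs $G$ of measures in $\mathcal{L}$.
   Context: $\epsilon>0$, $B>0$. $\mathcal{L}=\{\eta\in\mathcal{P}(\mathbb{R}):\mathbb{E}_\eta|X|^{1+\epsilon}\le B\}$, where $\mathcal{P}(\mathbb{R})$ is the set of Borel probability measures on $\mathbb{R}$. *)

theory Defs
  imports "HOL-Probability.Probability"
begin

definition moment_class :: "real \<Rightarrow> real \<Rightarrow> real measure set" where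
  "moment_class eps B = {\<eta>. real_distribution \<eta> \<and>
     (\<integral>\<^sup>+ x. ennreal (\<bar>x\<bar> powr (1 + eps)) \<partial>\<eta>) \<le> ennreal B}"

definition shiftG :: "(real \<Rightarrow> real) \<Rightarrow> real \<Rightarrow> real \<Rightarrow> real" where
  "shiftG F z x = (if x < 0 then max 0 (F x - z) else min 1 (F x + z))"

end

theory Submission
  imports Defs
begin

(* Let F = cdf mu. If sup_x |F x - cdf eta x| <= d, then for r >= 0 the measure eta gives
   (r, oo) at least max 0 (1 - F r - d) and (-oo, -r) at least max 0 (mu (-oo, -r) - d), and
   the distribution with CDF G_d attains both bounds. By the layer-cake formula
   E |X|^p = int_0^oo P(|X| > s^(1/p)) ds, G_d thus has the least p-th absolute moment among
   all distributions within Kolmogorov distance d of mu. This moment decreases in z, vanishes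
   at z = 1, and by Fatou's lemma (the tails of G_z depend continuously on z) the set of z
   where it is at most B is closed. Its least element is the optimal distance, and G_z
   attains it. *)

lemma nn_integral_layer_cake:
  assumes "sigma_finite_measure M" and [measurable]: "g \<in> borel_measurable M"
  shows "(\<integral>\<^sup>+x. ennreal (g x) \<partial>M) =
    (\<integral>\<^sup>+s\<in>{0..}. emeasure M {x\<in>space M. s < g x} \<partial>lborel)"
proof -
  interpret pair_sigma_finite M lborel
    using assms(1) lborel.sigma_finite_measure_axioms by (rule pair_sigma_finite.intro)
  have "ennreal t = (\<integral>\<^sup>+s. indicator {0..<t} s \<partial>lborel)" for t :: real
    by (cases "0 \<le> t") (simp_all add: ennreal_neg)
  then have "(\<integral>\<^sup>+x. ennreal (g x) \<partial>M) =
      (\<integral>\<^sup>+x. (\<integral>\<^sup>+s. of_bool (0 \<le> s \<and> s < g x) \<partial>lborel) \<partial>M)"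
    by (simp add: indicator_def of_bool_def)
  also have "\<dots> = (\<integral>\<^sup>+s. (\<integral>\<^sup>+x. of_bool (0 \<le> s \<and> s < g x) \<partial>M) \<partial>lborel)"
    by (rule Fubini'[symmetric]) measurable
  also have "\<dots> = (\<integral>\<^sup>+s\<in>{0..}. emeasure M {x\<in>space M. s < g x} \<partial>lborel)"
  proof (intro nn_integral_cong)
    fix s :: real
    have "(\<integral>\<^sup>+x. of_bool (0 \<le> s \<and> s < g x) \<partial>M) =
        (\<integral>\<^sup>+x. indicator {x\<in>space M. s < g x} x * indicator {0..} s \<partial>M)"
      by (intro nn_integral_cong) (auto simp: indicator_def)
    then show "(\<integral>\<^sup>+x. of_bool (0 \<le> s \<and> s < g x) \<partial>M) =
        emeasure M {x\<in>space M. s < g x} * indicator {0..} s"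
      by (simp add: nn_integral_multc)
  qed
  finally show ?thesis .
qed

lemma less_powr_iff_powr_inverse_less:
  fixes p s t :: real
  assumes "0 < p" "0 \<le> s" "0 \<le> t"
  shows "s < t powr p \<longleftrightarrow> s powr (1/p) < t"
proof -
  have s: "s = (s powr (1/p)) powr p"
    using assms by (simp add: powr_powr)
  show ?thesis
  proof
    assume "s < t powr p"
    then show "s powr (1/p) < t"
      using s powr_mono2[of p t "s powr (1/p)"] assms by fastforce
  next
    assume "s powr (1/p) < t"
    then show "s < t powr p"
      using s powr_less_mono2[of p "s powr (1/p)" t] assms by simp
  qed
qed

definition abs_moment :: "real \<Rightarrow> real measure \<Rightarrow> ennreal" where
  "abs_moment p \<eta> = (\<integral>\<^sup>+x. ennreal (\<bar>x\<bar> powr p) \<partial>\<eta>)"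

lemma mem_moment_class_iff:
  "\<eta> \<in> moment_class eps B \<longleftrightarrow> real_distribution \<eta> \<and> abs_moment (1 + eps) \<eta> \<le> ennreal B"
  by (simp add: moment_class_def abs_moment_def)

lemma borel_measurable_measure_abs_gt:
  fixes M :: "real measure"
  assumes "finite_measure M" "sets M = sets borel"
  shows "(\<lambda>r. measure M {x. r < \<bar>x\<bar>}) \<in> borel_measurable borel"
proof -
  have "mono (\<lambda>r. - measure M {x. r < \<bar>x\<bar>})"
  proof (intro monoI)
    fix r r' :: real
    assume "r \<le> r'"
    moreover have "{x. r < \<bar>x\<bar>} \<in> sets M"
      unfolding assms(2) by measurable
    ultimately show "- measure M {x. r < \<bar>x\<bar>} \<le> - measure M {x. r' < \<bar>x\<bar>}"
      by (auto intro!: finite_measure.finite_measure_mono[OF assms(1)])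
  qed
  then show ?thesis
    using borel_measurable_mono borel_measurable_uminus_eq by blast
qed

lemma abs_moment_eq_tail_integral:
  fixes M :: "real measure"
  assumes "finite_measure M" "sets M = sets borel" and "0 < p"
  shows "abs_moment p M =
    (\<integral>\<^sup>+s\<in>{0..}. ennreal (measure M {x. s powr (1/p) < \<bar>x\<bar>}) \<partial>lborel)"
proof -
  interpret finite_measure M by fact
  have space: "space M = UNIV"
    using sets_eq_imp_space_eq[OF assms(2)] by simp
  have [measurable]: "(\<lambda>x. \<bar>x\<bar> powr p) \<in> borel_measurable M"
    unfolding measurable_cong_sets[OF assms(2) refl] by measurable
  have "abs_moment p M = (\<integral>\<^sup>+s\<in>{0..}. emeasure M {x. s < \<bar>x\<bar> powr p} \<partial>lborel)"
    unfolding abs_moment_def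
    using nn_integral_layer_cake[of M "\<lambda>x. \<bar>x\<bar> powr p"] sigma_finite_measure_axioms
    by (simp add: space)
  also have "\<dots> = (\<integral>\<^sup>+s\<in>{0..}. ennreal (measure M {x. s powr (1/p) < \<bar>x\<bar>}) \<partial>lborel)"
  proof (intro nn_integral_cong)
    fix s :: real
    show "emeasure M {x. s < \<bar>x\<bar> powr p} * indicator {0..} s =
        ennreal (measure M {x. s powr (1/p) < \<bar>x\<bar>}) * indicator {0..} s"
    proof (cases "0 \<le> s")
      case True
      then have "{x. s < \<bar>x\<bar> powr p} = {x. s powr (1/p) < \<bar>x\<bar>}"
        using less_powr_iff_powr_inverse_less[OF assms(3)] by simp
      then show ?thesis by (simp add: emeasure_eq_measure)
    qed simp
  qed
  finally show ?thesis .
qed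

lemma abs_moment_mono_tail:
  assumes "finite_measure \<eta>" "sets \<eta> = sets borel" "finite_measure \<eta>'" "sets \<eta>' = sets borel"
    and "0 < p" and "\<And>r. 0 \<le> r \<Longrightarrow> measure \<eta> {x. r < \<bar>x\<bar>} \<le> measure \<eta>' {x. r < \<bar>x\<bar>}"
  shows "abs_moment p \<eta> \<le> abs_moment p \<eta>'"
proof -
  have "(\<integral>\<^sup>+s\<in>{0..}. ennreal (measure \<eta> {x. s powr (1/p) < \<bar>x\<bar>}) \<partial>lborel) \<le>
      (\<integral>\<^sup>+s\<in>{0..}. ennreal (measure \<eta>' {x. s powr (1/p) < \<bar>x\<bar>}) \<partial>lborel)"
  proof (intro nn_integral_mono)
    fix s :: real
    show "ennreal (measure \<eta> {x. s powr (1/p) < \<bar>x\<bar>}) * indicator {0..} s \<le>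
        ennreal (measure \<eta>' {x. s powr (1/p) < \<bar>x\<bar>}) * indicator {0..} s"
      using assms(6)[of "s powr (1/p)"] by (intro mult_right_mono ennreal_leI) simp_all
  qed
  then show ?thesis
    using assms by (simp add: abs_moment_eq_tail_integral)
qed

definition shift_measure :: "real measure \<Rightarrow> real \<Rightarrow> real measure" where
  "shift_measure \<mu> z = interval_measure (shiftG (cdf \<mu>) z)"

context real_distribution
begin

lemma shiftG_mono:
  assumes "0 \<le> z" "x \<le> y"
  shows "shiftG (cdf M) z x \<le> shiftG (cdf M) z y"
  using assms cdf_nondecreasing[OF assms(2)] cdf_bounded_prob[of x] cdf_nonneg[of y]
  unfolding shiftG_def by auto

lemma shiftG_right_continuous: "continuous (at_right a) (shiftG (cdf M) z)"
proof (cases "a < 0")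
  case True
  have "eventually (\<lambda>x. max 0 (cdf M x - z) = shiftG (cdf M) z x) (at_right a)"
    using eventually_at_right_real[OF True] by eventually_elim (simp add: shiftG_def)
  moreover have "((\<lambda>x. max 0 (cdf M x - z)) \<longlongrightarrow> shiftG (cdf M) z a) (at_right a)"
    using True cdf_is_right_cont[of a]
    by (auto simp: shiftG_def continuous_within intro!: tendsto_intros)
  ultimately show ?thesis
    unfolding continuous_within by (simp add: tendsto_cong)
next
  case False
  have "eventually (\<lambda>x. min 1 (cdf M x + z) = shiftG (cdf M) z x) (at_right a)"
    using eventually_at_right_real[OF less_add_one, of a]
    by eventually_elim (use False in \<open>simp add: shiftG_def\<close>)
  moreover have "((\<lambda>x. min 1 (cdf M x + z)) \<longlongrightarrow> shiftG (cdf M) z a) (at_right a)"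
    using False cdf_is_right_cont[of a]
    by (auto simp: shiftG_def continuous_within intro!: tendsto_intros)
  ultimately show ?thesis
    unfolding continuous_within by (simp add: tendsto_cong)
qed

lemma shiftG_at_bot:
  assumes "0 \<le> z"
  shows "(shiftG (cdf M) z \<longlongrightarrow> 0) at_bot"
proof -
  have "eventually (\<lambda>x. max 0 (cdf M x - z) = shiftG (cdf M) z x) at_bot"
    unfolding eventually_at_bot_dense by (intro exI[of _ 0]) (simp add: shiftG_def)
  moreover have "((\<lambda>x. max 0 (cdf M x - z)) \<longlongrightarrow> max 0 (0 - z)) at_bot"
    by (intro tendsto_intros cdf_lim_at_bot)
  ultimately show ?thesis
    using assms by (simp add: tendsto_cong)
qed

lemma shiftG_at_top:
  assumes "0 \<le> z"
  shows "(shiftG (cdf M) z \<longlongrightarrow> 1) at_top"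
proof -
  have "eventually (\<lambda>x. min 1 (cdf M x + z) = shiftG (cdf M) z x) at_top"
    unfolding eventually_at_top_linorder by (intro exI[of _ 0]) (simp add: shiftG_def)
  moreover have "((\<lambda>x. min 1 (cdf M x + z)) \<longlongrightarrow> min 1 (1 + z)) at_top"
    by (intro tendsto_intros cdf_lim_at_top_prob)
  ultimately show ?thesis
    using assms by (simp add: tendsto_cong)
qed

lemma
  assumes "0 \<le> z"
  shows real_distribution_shift_measure: "real_distribution (shift_measure M z)"
    and cdf_shift_measure: "cdf (shift_measure M z) = shiftG (cdf M) z"
  using real_distribution_interval_measure cdf_interval_measure
    shiftG_mono[OF assms] shiftG_right_continuous shiftG_at_bot[OF assms] shiftG_at_top[OF assms]
  unfolding shift_measure_def by blast+

lemma abs_cdf_diff_shiftG_le: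
  assumes "0 \<le> z"
  shows "\<bar>cdf M x - shiftG (cdf M) z x\<bar> \<le> z"
  using assms cdf_bounded_prob[of x] cdf_nonneg[of x] unfolding shiftG_def by auto

lemma measure_abs_gt_eq:
  assumes "0 \<le> r"
  shows "measure M {x. r < \<bar>x\<bar>} = (1 - cdf M r) + measure M {..< -r}"
proof -
  have "{x. r < \<bar>x\<bar>} = {r<..} \<union> {..< -r}"
    using assms by auto
  moreover have "{r<..} \<inter> {..< -r} = {}"
    using assms by auto
  moreover have "measure M {r<..} = 1 - cdf M r"
    using prob_compl[of "{..r}"] by (simp add: cdf_def Compl_eq_Diff_UNIV[symmetric] flip: Compl_atMost)
  ultimately show ?thesis
    by (simp add: finite_measure_Union)
qed

lemma SUP_abs_cdf_diff_shift_measure_le: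
  assumes "0 \<le> z"
  shows "(SUP x. \<bar>cdf M x - cdf (shift_measure M z) x\<bar>) \<le> z"
  using abs_cdf_diff_shiftG_le[OF assms] by (intro cSUP_least) (auto simp: cdf_shift_measure[OF assms])

lemma measure_lessThan_shift_measure:
  assumes "0 \<le> z" "a \<le> 0"
  shows "measure (shift_measure M z) {..<a} = max 0 (measure M {..<a} - z)"
proof -
  interpret \<nu>: real_distribution "shift_measure M z"
    using real_distribution_shift_measure[OF assms(1)] .
  have "eventually (\<lambda>x. x < a) (at_left a)"
    by (simp add: eventually_at_filter)
  then have "eventually (\<lambda>x. max 0 (cdf M x - z) = cdf (shift_measure M z) x) (at_left a)"
    by eventually_elim (use assms in \<open>simp add: cdf_shift_measure shiftG_def\<close>)
  moreover have "((\<lambda>x. max 0 (cdf M x - z)) \<longlongrightarrow> max 0 (measure M {..<a} - z)) (at_left a)"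
    by (intro tendsto_intros cdf_at_left)
  ultimately have "(cdf (shift_measure M z) \<longlongrightarrow> max 0 (measure M {..<a} - z)) (at_left a)"
    by (simp add: tendsto_cong)
  then show ?thesis
    using \<nu>.cdf_at_left tendsto_unique trivial_limit_at_left_real by blast
qed

lemma measure_abs_gt_shift_measure:
  assumes "0 \<le> z" "0 \<le> r"
  shows "measure (shift_measure M z) {x. r < \<bar>x\<bar>} =
    max 0 (1 - cdf M r - z) + max 0 (measure M {..< -r} - z)"
proof -
  interpret \<nu>: real_distribution "shift_measure M z"
    using real_distribution_shift_measure[OF assms(1)] .
  show ?thesis
    using assms \<nu>.measure_abs_gt_eq measure_lessThan_shift_measure[OF assms(1), of "-r"]
    by (auto simp: cdf_shift_measure shiftG_def)
qed

lemma tendsto_measure_abs_gt_shift_measure: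
  assumes "0 \<le> z" "0 \<le> r" "(\<zeta> \<longlongrightarrow> z) F" "\<And>n. 0 \<le> \<zeta> n"
  shows "((\<lambda>n. measure (shift_measure M (\<zeta> n)) {x. r < \<bar>x\<bar>}) \<longlongrightarrow>
    measure (shift_measure M z) {x. r < \<bar>x\<bar>}) F"
  using assms by (simp add: measure_abs_gt_shift_measure) (intro tendsto_intros)

end

lemma abs_measure_lessThan_diff_le:
  assumes "real_distribution \<mu>" "real_distribution \<eta>" "\<And>x. \<bar>cdf \<mu> x - cdf \<eta> x\<bar> \<le> d"
  shows "\<bar>measure \<mu> {..<a} - measure \<eta> {..<a}\<bar> \<le> d"
proof -
  interpret \<mu>: real_distribution \<mu> by fact
  interpret \<eta>: real_distribution \<eta> by fact
  have "((\<lambda>x. \<bar>cdf \<mu> x - cdf \<eta> x\<bar>) \<longlongrightarrow> \<bar>measure \<mu> {..<a} - measure \<eta> {..<a}\<bar>) (at_left a)"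
    by (intro tendsto_intros \<mu>.cdf_at_left \<eta>.cdf_at_left)
  then show ?thesis
    using assms(3) by (intro tendsto_upperbound[OF _ always_eventually]) auto
qed

lemma measure_abs_gt_shift_measure_le:
  assumes "real_distribution \<mu>" "real_distribution \<eta>" "\<And>x. \<bar>cdf \<mu> x - cdf \<eta> x\<bar> \<le> d"
    and "0 \<le> r"
  shows "measure (shift_measure \<mu> d) {x. r < \<bar>x\<bar>} \<le> measure \<eta> {x. r < \<bar>x\<bar>}"
proof -
  interpret \<eta>: real_distribution \<eta> by fact
  have "0 \<le> d"
    using assms(3)[of 0] by linarith
  have "1 - cdf \<mu> r - d \<le> 1 - cdf \<eta> r" "0 \<le> 1 - cdf \<eta> r"
    using assms(3)[of r] \<eta>.cdf_bounded_prob[of r] by auto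
  moreover have "measure \<mu> {..< -r} - d \<le> measure \<eta> {..< -r}"
    using abs_measure_lessThan_diff_le[OF assms(1-3), of "-r"] by linarith
  ultimately have "max 0 (1 - cdf \<mu> r - d) + max 0 (measure \<mu> {..< -r} - d) \<le>
      (1 - cdf \<eta> r) + measure \<eta> {..< -r}"
    by (intro add_mono max.boundedI) auto
  then show ?thesis
    using real_distribution.measure_abs_gt_shift_measure[OF assms(1) \<open>0 \<le> d\<close> assms(4)] \<eta>.measure_abs_gt_eq[OF assms(4)]
    by simp
qed

lemma abs_moment_shift_measure_le:
  assumes "real_distribution \<mu>" "real_distribution \<eta>" "\<And>x. \<bar>cdf \<mu> x - cdf \<eta> x\<bar> \<le> d"
    and "0 < p"
  shows "abs_moment p (shift_measure \<mu> d) \<le> abs_moment p \<eta>"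
proof -
  interpret \<eta>: real_distribution \<eta> by fact
  have "0 \<le> d"
    using assms(3)[of 0] by linarith
  then interpret \<nu>: real_distribution "shift_measure \<mu> d"
    by (rule real_distribution.real_distribution_shift_measure[OF assms(1)])
  show ?thesis
    using assms measure_abs_gt_shift_measure_le
    by (intro abs_moment_mono_tail \<nu>.finite_measure_axioms \<eta>.finite_measure_axioms) auto
qed

lemma abs_moment_shift_measure_antimono:
  assumes "real_distribution \<mu>" "0 \<le> z" "z \<le> z'" "0 < p"
  shows "abs_moment p (shift_measure \<mu> z') \<le> abs_moment p (shift_measure \<mu> z)"
proof (rule abs_moment_shift_measure_le[OF assms(1) _ _ assms(4)])
  interpret \<mu>: real_distribution \<mu> by fact
  show "real_distribution (shift_measure \<mu> z)"
    using assms(2) by (rule \<mu>.real_distribution_shift_measure)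
  show "\<bar>cdf \<mu> x - cdf (shift_measure \<mu> z) x\<bar> \<le> z'" for x
    using \<mu>.abs_cdf_diff_shiftG_le[OF assms(2), of x] assms(3)
    by (simp add: \<mu>.cdf_shift_measure[OF assms(2)])
qed

lemma abs_moment_shift_measure_one:
  assumes "real_distribution \<mu>" "0 < p"
  shows "abs_moment p (shift_measure \<mu> 1) = 0"
proof -
  interpret \<mu>: real_distribution \<mu> by fact
  interpret \<nu>: real_distribution "shift_measure \<mu> 1"
    by (rule \<mu>.real_distribution_shift_measure) simp
  have "measure (shift_measure \<mu> 1) {x. r < \<bar>x\<bar>} = 0" if "0 \<le> r" for r
    using \<mu>.measure_abs_gt_shift_measure[OF _ that, of 1] \<mu>.cdf_nonneg[of r] by simp
  then show ?thesis
    using assms(2) by (simp add: abs_moment_eq_tail_integral \<nu>.finite_measure_axioms indicator_def)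
qed

lemma abs_moment_shift_measure_le_from_right:
  assumes "real_distribution \<mu>" "0 \<le> z" "0 < p"
    and "\<And>z'. z < z' \<Longrightarrow> abs_moment p (shift_measure \<mu> z') \<le> C"
  shows "abs_moment p (shift_measure \<mu> z) \<le> C"
proof -
  interpret \<mu>: real_distribution \<mu> by fact
  define T where "T \<zeta> =
    (\<lambda>s. ennreal (measure (shift_measure \<mu> \<zeta>) {x. s powr (1/p) < \<bar>x\<bar>}) * indicator {0..} s)"
    for \<zeta>
  define zn where "zn n = z + 1 / Suc n" for n
  have zn: "0 \<le> zn n" "z < zn n" for n
    using assms(2) by (simp_all add: zn_def)
  have moment: "abs_moment p (shift_measure \<mu> \<zeta>) = integral\<^sup>N lborel (T \<zeta>)" if "0 \<le> \<zeta>" for \<zeta>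
  proof -
    interpret \<nu>: real_distribution "shift_measure \<mu> \<zeta>"
      using that by (rule \<mu>.real_distribution_shift_measure)
    show ?thesis
      using assms(3) by (simp add: abs_moment_eq_tail_integral \<nu>.finite_measure_axioms T_def)
  qed
  have [measurable]: "T \<zeta> \<in> borel_measurable lborel" if "0 \<le> \<zeta>" for \<zeta>
  proof -
    interpret \<nu>: real_distribution "shift_measure \<mu> \<zeta>"
      using that by (rule \<mu>.real_distribution_shift_measure)
    note [measurable] =
      measurable_compose[OF _ borel_measurable_measure_abs_gt[OF \<nu>.finite_measure_axioms],
        of "\<lambda>s. s powr (1/p)" lborel, simplified]
    show ?thesis
      unfolding T_def by measurable
  qed
  have "zn \<longlonglongrightarrow> z + 0"
    unfolding zn_def by (intro tendsto_add tendsto_const LIMSEQ_Suc[OF lim_inverse_n'])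
  then have "(\<lambda>n. T (zn n) s) \<longlonglongrightarrow> T z s" for s
    using \<mu>.tendsto_measure_abs_gt_shift_measure[OF assms(2) _ _ zn(1), of "s powr (1/p)"]
    by (cases "0 \<le> s") (simp_all add: T_def tendsto_ennrealI)
  then have "integral\<^sup>N lborel (T z) = (\<integral>\<^sup>+s. liminf (\<lambda>n. T (zn n) s) \<partial>lborel)"
    by (intro nn_integral_cong) (metis lim_imp_Liminf trivial_limit_sequentially)
  also have "\<dots> \<le> liminf (\<lambda>n. integral\<^sup>N lborel (T (zn n)))"
    using zn(1) by (intro nn_integral_liminf) simp
  also have "\<dots> \<le> C"
    using assms(4)[OF zn(2)] moment[OF zn(1)] by (intro Liminf_le always_eventually) auto
  finally show ?thesis
    using moment[OF assms(2)] by simp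
qed

lemma exists_least_shift_abs_moment_le:
  assumes "real_distribution \<mu>" "0 < p"
  shows "\<exists>z\<ge>0. abs_moment p (shift_measure \<mu> z) \<le> C \<and>
    (\<forall>d\<ge>0. abs_moment p (shift_measure \<mu> d) \<le> C \<longrightarrow> z \<le> d)"
proof -
  define S where "S = {z. 0 \<le> z \<and> abs_moment p (shift_measure \<mu> z) \<le> C}"
  have "1 \<in> S"
    using abs_moment_shift_measure_one[OF assms] by (simp add: S_def)
  have "bdd_below S"
    by (rule bdd_belowI[of _ 0]) (simp add: S_def)
  define z where "z = Inf S"
  have "0 \<le> z"
    unfolding z_def using \<open>1 \<in> S\<close> by (intro cInf_greatest) (force, simp add: S_def)
  moreover have "abs_moment p (shift_measure \<mu> z) \<le> C"
  proof (rule abs_moment_shift_measure_le_from_right[OF assms(1) \<open>0 \<le> z\<close> assms(2)])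
    fix z' assume "z < z'"
    then obtain d where "d \<in> S" "d < z'"
      using cInf_lessD[of S z'] \<open>1 \<in> S\<close> by (auto simp: z_def)
    then show "abs_moment p (shift_measure \<mu> z') \<le> C"
      using abs_moment_shift_measure_antimono[OF assms(1) _ _ assms(2), of d z']
      by (auto simp: S_def)
  qed
  moreover have "z \<le> d" if "0 \<le> d" "abs_moment p (shift_measure \<mu> d) \<le> C" for d
    unfolding z_def using that \<open>bdd_below S\<close> by (intro cInf_lower) (auto simp: S_def)
  ultimately show ?thesis
    by blast
qed

lemma abs_cdf_diff_le_SUP:
  assumes "real_distribution \<mu>" "real_distribution \<eta>"
  shows "\<bar>cdf \<mu> x - cdf \<eta> x\<bar> \<le> (SUP y. \<bar>cdf \<mu> y - cdf \<eta> y\<bar>)"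
proof (rule cSUP_upper[OF UNIV_I bdd_aboveI2])
  interpret \<mu>: real_distribution \<mu> by fact
  interpret \<eta>: real_distribution \<eta> by fact
  show "\<bar>cdf \<mu> y - cdf \<eta> y\<bar> \<le> 1" for y
    using \<mu>.cdf_bounded_prob[of y] \<mu>.cdf_nonneg[of y] \<eta>.cdf_bounded_prob[of y] \<eta>.cdf_nonneg[of y]
    by linarith
qed

theorem lemma25:
  fixes eps B :: real and \<mu> :: "real measure"
  assumes "eps > 0" and "B > 0"
    and "real_distribution \<mu>"
  shows "\<exists>z\<ge>0. \<exists>\<nu>\<in>moment_class eps B.
           cdf \<nu> = shiftG (cdf \<mu>) z \<and>
           (\<forall>\<eta>\<in>moment_class eps B.
              (SUP x. \<bar>cdf \<mu> x - cdf \<nu> x\<bar>) \<le> (SUP x. \<bar>cdf \<mu> x - cdf \<eta> x\<bar>))"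
proof -
  interpret \<mu>: real_distribution \<mu> by fact
  have p: "0 < 1 + eps"
    using assms(1) by simp
  obtain z where "0 \<le> z" and moment_le: "abs_moment (1 + eps) (shift_measure \<mu> z) \<le> B"
    and least: "\<And>d. 0 \<le> d \<Longrightarrow> abs_moment (1 + eps) (shift_measure \<mu> d) \<le> B \<Longrightarrow> z \<le> d"
    using exists_least_shift_abs_moment_le[OF assms(3) p] by auto
  have "shift_measure \<mu> z \<in> moment_class eps B"
    using \<mu>.real_distribution_shift_measure[OF \<open>0 \<le> z\<close>] moment_le by (simp add: mem_moment_class_iff)
  moreover have "z \<le> (SUP x. \<bar>cdf \<mu> x - cdf \<eta> x\<bar>)" if "\<eta> \<in> moment_class eps B" for \<eta>
  proof (rule least)
    have \<eta>: "real_distribution \<eta>" "abs_moment (1 + eps) \<eta> \<le> B"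
      using that by (simp_all add: mem_moment_class_iff)
    note close = abs_cdf_diff_le_SUP[OF assms(3) \<eta>(1)]
    show "0 \<le> (SUP x. \<bar>cdf \<mu> x - cdf \<eta> x\<bar>)"
      using close[of 0] by linarith
    show "abs_moment (1 + eps) (shift_measure \<mu> (SUP x. \<bar>cdf \<mu> x - cdf \<eta> x\<bar>)) \<le> B"
      using abs_moment_shift_measure_le[OF assms(3) \<eta>(1) close p] \<eta>(2) by (rule order_trans)
  qed
  ultimately show ?thesis
    using \<open>0 \<le> z\<close> \<mu>.cdf_shift_measure \<mu>.SUP_abs_cdf_diff_shift_measure_le
    by (blast intro: order_trans)
qed

end
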